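(* Let $G$ be an msp-digraph. Then $\chi'_o(G)\le 7$.
   Context: An oriented $r$-arc-coloring of a digraph $G=(V,E)$ is a map $c:E\to\{1,\dots,r\}$ such that (i) $c((u,v))\ne c((v,w))$ for every two arcs $(u,v),(v,w)\in E$, and (ii) $c((u,v))\ne c((y,z))$ for all arcs $(u,v),(v,w),(x,y),(y,z)\in E$ with $c((v,w))=c((x,y))$. The oriented chromatic index $\chi'_o(G)$ is the smallest $r$ for which such a coloring exists. Minimal vertex series-parallel digraphs (msp-digraphs) are defined recursively: (i) a single vertex with no arcs is an msp-digraph; (ii) if $G_1=(V_1,E_1)$ and $G_2=(V_2,E_2)$ are vertex-disjoint msp-digraphs, $O_1$ is the set of vertices of outdegree $0$ in $G_1$ and $I_2$ the set of vertices of indegree $0$ in $G_2$, then the parallel composition $G_1\cup G_2=(V_1\cup V_2,E_1\cup E_2)$ and the series composition $G_1\times G_2=(V_1\cup V_2,E_1\cup E_2\cup(O_1\times I_2))$ are msp-digraphs. *)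

theory Defs
  imports Main
begin

definition sinks :: "'a set \<Rightarrow> ('a \<times> 'a) set \<Rightarrow> 'a set" where
  "sinks V E = {v \<in> V. \<not> (\<exists>w. (v, w) \<in> E)}"

definition sources :: "'a set \<Rightarrow> ('a \<times> 'a) set \<Rightarrow> 'a set" where
  "sources V E = {v \<in> V. \<not> (\<exists>u. (u, v) \<in> E)}"

inductive msp :: "'a set \<Rightarrow> ('a \<times> 'a) set \<Rightarrow> bool" where
  single: "msp {v} {}"
| parallel: "\<lbrakk>msp V1 E1; msp V2 E2; V1 \<inter> V2 = {}\<rbrakk> \<Longrightarrow> msp (V1 \<union> V2) (E1 \<union> E2)"
| series: "\<lbrakk>msp V1 E1; msp V2 E2; V1 \<inter> V2 = {}\<rbrakk> \<Longrightarrow>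
     msp (V1 \<union> V2) (E1 \<union> E2 \<union> (sinks V1 E1 \<times> sources V2 E2))"

definition oriented_arc_coloring :: "('a \<times> 'a) set \<Rightarrow> nat \<Rightarrow> (('a \<times> 'a) \<Rightarrow> nat) \<Rightarrow> bool" where
  "oriented_arc_coloring E r c \<longleftrightarrow>
     (\<forall>e\<in>E. c e \<in> {1..r}) \<and>
     (\<forall>u v w. (u, v) \<in> E \<longrightarrow> (v, w) \<in> E \<longrightarrow> c (u, v) \<noteq> c (v, w)) \<and>
     (\<forall>u v w x y z. (u, v) \<in> E \<longrightarrow> (v, w) \<in> E \<longrightarrow> (x, y) \<in> E \<longrightarrow> (y, z) \<in> E \<longrightarrow>
        c (v, w) = c (x, y) \<longrightarrow> c (u, v) \<noteq> c (y, z))"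

definition oriented_chromatic_index :: "('a \<times> 'a) set \<Rightarrow> nat" where
  "oriented_chromatic_index E = (LEAST r. \<exists>c. oriented_arc_coloring E r c)"

end

theory Submission
  imports Defs "HOL-Library.Numeral_Type"
begin

text \<open>Colour the arcs by the vertices of the Paley tournament on \<open>\<int>/7\<close> (\<open>a \<rightarrow> b\<close> iff \<open>b - a\<close>
  is a nonzero square) so that consecutive arcs \<open>(u,v), (v,w)\<close> get colours with
  \<open>c(u,v) \<rightarrow> c(v,w)\<close>. Because the tournament is antisymmetric, such a colouring is an oriented
  7-arc-colouring. It is built along the msp decomposition, keeping the arcs into sinks coloured
  from a triangle \<open>A = {i, i+1, i+5}\<close> and the arcs out of sources from a triangle
  \<open>B = {j, j+2, j+6}\<close> with \<open>j - i \<in> {0, 2, 3}\<close>. Such \<open>A\<close> and \<open>B\<close> share exactly one colour \<open>x\<close>,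
  and for every such pair there are pairs \<open>(A1, B)\<close> and \<open>(A, B2)\<close> of the same kind with
  \<open>A1 \<rightarrow> x \<rightarrow> B2\<close>; colouring the first part of a series composition with \<open>(A1, B)\<close>, the second
  with \<open>(A, B2)\<close> and all new arcs with \<open>x\<close> restores the invariant.\<close>

definition line_hom :: "('c \<Rightarrow> 'c \<Rightarrow> bool) \<Rightarrow> ('a \<times> 'a) set \<Rightarrow> ('a \<times> 'a \<Rightarrow> 'c) \<Rightarrow> bool"
  where
  "line_hom T E c \<longleftrightarrow> (\<forall>u v w. (u, v) \<in> E \<longrightarrow> (v, w) \<in> E \<longrightarrow> T (c (u, v)) (c (v, w)))"

lemma oriented_chromatic_index_le_card:
  fixes T :: "'c::finite \<Rightarrow> 'c \<Rightarrow> bool"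
  assumes asym: "\<And>a b. T a b \<Longrightarrow> \<not> T b a" and hom: "line_hom T E c"
  shows "oriented_chromatic_index E \<le> CARD('c)"
proof -
  obtain h where h: "bij_betw h (UNIV :: 'c set) {0..<CARD('c)}"
    using ex_bij_betw_finite_nat[of "UNIV :: 'c set"] by auto
  then have h_inj: "h a = h b \<longleftrightarrow> a = b" for a b
    by (auto simp: bij_betw_def inj_eq)
  have "oriented_arc_coloring E CARD('c) (\<lambda>e. Suc (h (c e)))"
    unfolding oriented_arc_coloring_def
  proof (intro conjI allI impI)
    show "\<forall>e\<in>E. Suc (h (c e)) \<in> {1..CARD('c)}"
      using h by (auto simp: bij_betw_def Suc_le_eq)
  next
    fix u v w
    assume "(u, v) \<in> E" "(v, w) \<in> E"
    then have "T (c (u, v)) (c (v, w))"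
      using hom by (auto simp: line_hom_def)
    then show "Suc (h (c (u, v))) \<noteq> Suc (h (c (v, w)))"
      by (metis asym h_inj nat.inject)
  next
    fix u v w x y z
    assume arcs: "(u, v) \<in> E" "(v, w) \<in> E" "(x, y) \<in> E" "(y, z) \<in> E"
      and "Suc (h (c (v, w))) = Suc (h (c (x, y)))"
    then have same: "c (v, w) = c (x, y)"
      by (simp add: h_inj)
    have "T (c (u, v)) (c (v, w))" "T (c (x, y)) (c (y, z))"
      using hom arcs by (auto simp: line_hom_def)
    then show "Suc (h (c (u, v))) \<noteq> Suc (h (c (y, z)))"
      using same by (metis asym h_inj nat.inject)
  qed
  then show ?thesis
    unfolding oriented_chromatic_index_def by (blast intro: Least_le)
qed

lemma sources_parallel:
  assumes "E1 \<subseteq> V1 \<times> V1" "E2 \<subseteq> V2 \<times> V2" "V1 \<inter> V2 = {}"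
  shows "sources (V1 \<union> V2) (E1 \<union> E2) = sources V1 E1 \<union> sources V2 E2"
  using assms by (auto simp: sources_def)

lemma sinks_parallel:
  assumes "E1 \<subseteq> V1 \<times> V1" "E2 \<subseteq> V2 \<times> V2" "V1 \<inter> V2 = {}"
  shows "sinks (V1 \<union> V2) (E1 \<union> E2) = sinks V1 E1 \<union> sinks V2 E2"
  using assms by (auto simp: sinks_def)

lemma sources_series:
  assumes "E1 \<subseteq> V1 \<times> V1" "E2 \<subseteq> V2 \<times> V2" "V1 \<inter> V2 = {}" "sinks V1 E1 \<noteq> {}"
  shows "sources (V1 \<union> V2) (E1 \<union> E2 \<union> sinks V1 E1 \<times> sources V2 E2) = sources V1 E1"
  using assms unfolding sources_def sinks_def by blast

lemma sinks_series:
  assumes "E1 \<subseteq> V1 \<times> V1" "E2 \<subseteq> V2 \<times> V2" "V1 \<inter> V2 = {}" "sources V2 E2 \<noteq> {}"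
  shows "sinks (V1 \<union> V2) (E1 \<union> E2 \<union> sinks V1 E1 \<times> sources V2 E2) = sinks V2 E2"
  using assms unfolding sources_def sinks_def by blast

lemma msp_arcs_subset: "msp V E \<Longrightarrow> E \<subseteq> V \<times> V"
  by (induction rule: msp.induct) (auto simp: sources_def sinks_def)

lemma msp_sources_sinks_nonempty: "msp V E \<Longrightarrow> sources V E \<noteq> {} \<and> sinks V E \<noteq> {}"
proof (induction rule: msp.induct)
  case (single v)
  then show ?case by (simp add: sources_def sinks_def)
next
  case (parallel V1 E1 V2 E2)
  then show ?case
    by (simp add: sources_parallel sinks_parallel msp_arcs_subset)
next
  case (series V1 E1 V2 E2)
  then show ?case
    by (simp add: sources_series sinks_series msp_arcs_subset)
qed

definition boundary_colouring :: "('c \<Rightarrow> 'c \<Rightarrow> bool) \<Rightarrow> 'a set \<Rightarrow> ('a \<times> 'a) set \<Rightarrow>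
    'c set \<Rightarrow> 'c set \<Rightarrow> ('a \<times> 'a \<Rightarrow> 'c) \<Rightarrow> bool" where
  "boundary_colouring T V E A B c \<longleftrightarrow> line_hom T E c \<and>
     (\<forall>u v. (u, v) \<in> E \<longrightarrow> v \<in> sinks V E \<longrightarrow> c (u, v) \<in> A) \<and>
     (\<forall>u v. (u, v) \<in> E \<longrightarrow> u \<in> sources V E \<longrightarrow> c (u, v) \<in> B)"

lemma line_hom_parallel:
  assumes hom: "line_hom T E1 c1" "line_hom T E2 c2"
    and arcs: "E1 \<subseteq> V1 \<times> V1" "E2 \<subseteq> V2 \<times> V2" and disj: "V1 \<inter> V2 = {}"
  shows "line_hom T (E1 \<union> E2) (\<lambda>e. if e \<in> E1 then c1 e else c2 e)"
  unfolding line_hom_def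
proof (intro allI impI)
  fix u v w
  assume "(u, v) \<in> E1 \<union> E2" "(v, w) \<in> E1 \<union> E2"
  then consider "(u, v) \<in> E1" "(v, w) \<in> E1" | "(u, v) \<in> E2" "(v, w) \<in> E2" "(v, w) \<notin> E1"
    using arcs disj by blast
  then show "T (if (u, v) \<in> E1 then c1 (u, v) else c2 (u, v))
               (if (v, w) \<in> E1 then c1 (v, w) else c2 (v, w))"
    using hom arcs disj unfolding line_hom_def by cases auto
qed

lemma boundary_colouring_parallel:
  assumes c1: "boundary_colouring T V1 E1 A B c1" and c2: "boundary_colouring T V2 E2 A B c2"
    and arcs: "E1 \<subseteq> V1 \<times> V1" "E2 \<subseteq> V2 \<times> V2" and disj: "V1 \<inter> V2 = {}"
  shows "boundary_colouring T (V1 \<union> V2) (E1 \<union> E2) A B (\<lambda>e. if e \<in> E1 then c1 e else c2 e)"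
proof -
  have "e \<in> E1 \<Longrightarrow> e \<notin> E2" for e
    using arcs disj by auto
  moreover have "line_hom T (E1 \<union> E2) (\<lambda>e. if e \<in> E1 then c1 e else c2 e)"
    using c1 c2 unfolding boundary_colouring_def by (blast intro: line_hom_parallel[OF _ _ arcs disj])
  ultimately show ?thesis
    using c1 c2 arcs disj
    unfolding boundary_colouring_def sources_parallel[OF arcs disj] sinks_parallel[OF arcs disj]
    by (auto simp: sinks_def sources_def)
qed

lemma boundary_colouring_series:
  assumes c1: "boundary_colouring T V1 E1 A1 B1 c1" and c2: "boundary_colouring T V2 E2 A2 B2 c2"
    and arcs: "E1 \<subseteq> V1 \<times> V1" "E2 \<subseteq> V2 \<times> V2" and disj: "V1 \<inter> V2 = {}"
    and ne: "sinks V1 E1 \<noteq> {}" "sources V2 E2 \<noteq> {}"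
    and "B1 \<subseteq> B" "A2 \<subseteq> A" "x \<in> A \<inter> B"
    and into_x: "\<forall>a\<in>A1. T a x" and out_of_x: "\<forall>b\<in>B2. T x b"
  shows "boundary_colouring T (V1 \<union> V2) (E1 \<union> E2 \<union> sinks V1 E1 \<times> sources V2 E2) A B
           (\<lambda>e. if e \<in> E1 then c1 e else if e \<in> E2 then c2 e else x)"
    (is "boundary_colouring T _ ?E A B ?c")
proof -
  have hom: "line_hom T E1 c1" "line_hom T E2 c2"
    using c1 c2 by (simp_all add: boundary_colouring_def)
  have "T (?c (u, v)) (?c (v, w))" if uv: "(u, v) \<in> ?E" and vw: "(v, w) \<in> ?E" for u v w
  proof (cases "v \<in> V1")
    case True
    then have uv1: "(u, v) \<in> E1"
      using uv arcs disj by (auto simp: sources_def)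
    show ?thesis
    proof (cases "(v, w) \<in> E1")
      case True
      with uv1 show ?thesis
        using hom by (simp add: line_hom_def)
    next
      case False
      with vw \<open>v \<in> V1\<close> have "v \<in> sinks V1 E1" "?c (v, w) = x"
        using arcs disj by (auto simp: sinks_def)
      with uv1 show ?thesis
        using c1 into_x by (auto simp: boundary_colouring_def)
    qed
  next
    case False
    with vw have vw2: "(v, w) \<in> E2" "(v, w) \<notin> E1"
      using arcs by (auto simp: sinks_def)
    show ?thesis
    proof (cases "(u, v) \<in> E2")
      case True
      moreover have "(u, v) \<notin> E1"
        using \<open>v \<notin> V1\<close> arcs by auto
      ultimately show ?thesis
        using vw2 hom by (simp add: line_hom_def)
    next
      case False
      with uv \<open>v \<notin> V1\<close> have "v \<in> sources V2 E2" "?c (u, v) = x"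
        using arcs by auto
      with vw2 show ?thesis
        using c2 out_of_x by (auto simp: boundary_colouring_def)
    qed
  qed
  then have "line_hom T ?E ?c"
    by (simp add: line_hom_def)
  moreover have "?c (u, v) \<in> A" if "(u, v) \<in> ?E" "v \<in> sinks V2 E2" for u v
    using that assms by (auto simp: boundary_colouring_def sinks_def)
  moreover have "?c (u, v) \<in> B" if "(u, v) \<in> ?E" "u \<in> sources V1 E1" for u v
    using that assms by (auto simp: boundary_colouring_def sources_def)
  ultimately show ?thesis
    unfolding boundary_colouring_def sources_series[OF arcs disj ne(1)]
      sinks_series[OF arcs disj ne(2)]
    by blast
qed

definition paley :: "7 \<Rightarrow> 7 \<Rightarrow> bool" where
  "paley a b \<longleftrightarrow> b - a \<in> {1, 2, 4}"

lemma paley_asym: "paley a b \<Longrightarrow> \<not> paley b a"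
proof -
  have "t \<in> {1, 2, 4} \<Longrightarrow> - t \<notin> {1, 2, 4}" for t :: 7
    by auto
  from this[of "b - a"] show "paley a b \<Longrightarrow> \<not> paley b a"
    unfolding paley_def by simp
qed

definition sink_colours :: "7 \<Rightarrow> 7 set" where
  "sink_colours i = {i, i + 1, i + 5}"

definition source_colours :: "7 \<Rightarrow> 7 set" where
  "source_colours j = {j, j + 2, j + 6}"

lemma paley_series_step:
  assumes "d \<in> {0, 2, 3}"
  obtains i1 d1 d2 x where "d1 \<in> {0, 2, 3}" "d2 \<in> {0, 2, 3}" "i1 + d1 = i + d"
    "x \<in> sink_colours i \<inter> source_colours (i + d)"
    "\<forall>a\<in>sink_colours i1. paley a x" "\<forall>b\<in>source_colours (i + d2). paley x b"
proof -
  note defs = paley_def sink_colours_def source_colours_def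
  consider "d = 0" | "d = 2" | "d = 3"
    using assms by blast
  then show thesis
  proof cases
    case 1
    show thesis
      by (rule that[of 2 2 "i + 5" i]) (use 1 in \<open>auto simp: defs\<close>)
  next
    case 2
    show thesis
      by (rule that[of 3 3 "i + 6" "i + 1"]) (use 2 in \<open>auto simp: defs\<close>)
  next
    case 3
    show thesis
      by (rule that[of 0 0 "i + 3" "i + 5"]) (use 3 in \<open>auto simp: defs\<close>)
  qed
qed

lemma msp_paley_boundary_colouring:
  assumes "msp V E" and "d \<in> {0, 2, 3}"
  shows "\<exists>c. boundary_colouring paley V E (sink_colours i) (source_colours (i + d)) c"
  using assms
proof (induction arbitrary: i d rule: msp.induct)
  case (single v)
  then show ?case
    by (simp add: boundary_colouring_def line_hom_def)
next
  case (parallel V1 E1 V2 E2)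
  obtain c1 where c1: "boundary_colouring paley V1 E1 (sink_colours i) (source_colours (i + d)) c1"
    using parallel.IH(1)[OF parallel.prems] by blast
  obtain c2 where c2: "boundary_colouring paley V2 E2 (sink_colours i) (source_colours (i + d)) c2"
    using parallel.IH(2)[OF parallel.prems] by blast
  have arcs: "E1 \<subseteq> V1 \<times> V1" "E2 \<subseteq> V2 \<times> V2"
    using parallel.hyps by (simp_all add: msp_arcs_subset)
  show ?case
    using boundary_colouring_parallel[OF c1 c2 arcs \<open>V1 \<inter> V2 = {}\<close>] by blast
next
  case (series V1 E1 V2 E2)
  obtain i1 d1 d2 x where d12: "d1 \<in> {0, 2, 3}" "d2 \<in> {0, 2, 3}" and "i1 + d1 = i + d"
    and x: "x \<in> sink_colours i \<inter> source_colours (i + d)"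
      "\<forall>a\<in>sink_colours i1. paley a x" "\<forall>b\<in>source_colours (i + d2). paley x b"
    using paley_series_step[OF series.prems] .
  obtain c1 where "boundary_colouring paley V1 E1 (sink_colours i1) (source_colours (i1 + d1)) c1"
    using series.IH(1)[OF d12(1)] by blast
  then have c1: "boundary_colouring paley V1 E1 (sink_colours i1) (source_colours (i + d)) c1"
    by (simp only: \<open>i1 + d1 = i + d\<close>)
  obtain c2 where c2: "boundary_colouring paley V2 E2 (sink_colours i) (source_colours (i + d2)) c2"
    using series.IH(2)[OF d12(2)] by blast
  have arcs: "E1 \<subseteq> V1 \<times> V1" "E2 \<subseteq> V2 \<times> V2"
    using series.hyps by (simp_all add: msp_arcs_subset)
  have ne: "sinks V1 E1 \<noteq> {}" "sources V2 E2 \<noteq> {}"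
    using series.hyps by (simp_all add: msp_sources_sinks_nonempty)
  show ?case
    using boundary_colouring_series[OF c1 c2 arcs \<open>V1 \<inter> V2 = {}\<close> ne order_refl order_refl x] by blast
qed

theorem mainTheorem8:
  fixes V :: "'a set" and E :: "('a \<times> 'a) set"
  assumes "msp V E"
  shows "oriented_chromatic_index E \<le> 7"
proof -
  obtain c where "boundary_colouring paley V E (sink_colours 0) (source_colours 0) c"
    using msp_paley_boundary_colouring[OF assms, where i = 0 and d = 0] by auto
  then have "line_hom paley E c"
    by (simp add: boundary_colouring_def)
  then show ?thesis
    using oriented_chromatic_index_le_card[of paley] paley_asym by simp
qed

end
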